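(* Let $\Gamma$ be a finite group and let $(X,\Gamma,\alpha,\mathcal{I})$ be a voltage graph, with $\mathcal{I}=(I_v)_{v\in V_X}$, such that the derived graph $X(\Gamma,\mathcal{I})$ is connected. (1) There is an exact sequence of $\mathbb{Z}[\Gamma]$-modules \[ 0\to\mathbb{Z}\to\bigoplus_{v\in V_X}\mathbb{Z}[\Gamma/I_v]\xrightarrow{\mathcal{L}_{X,\Gamma,\mathcal{I}}}\bigoplus_{v\in V_X}\mathbb{Z}[\Gamma/I_v]\to\mathrm{Pic}(X(\Gamma,\mathcal{I}))\to0. \] Here the first map sends $1$ to the sum of all cosets in all components. (2) Let $H$ be a normal subgroup of $\Gamma$, and let $(X,\Gamma/H,\alpha_H,\mathcal{I}_H)$ be the induced voltage graph. Then the exact sequence of (1) for $(X,\Gamma,\alpha,\mathcal{I})$ and the exact sequence of (1) for $(X,\Gamma/H,\alpha_H,\mathcal{I}_H)$, namely \[ 0\to\mathbb{Z}\to\bigoplus_v\mathbb{Z}[\Gamma/I_vH]\xrightarrow{\mathcal{L}_{X,\Gamma/H,\mathcal{I}_H}}\bigoplus_v\mathbb{Z}[\Gamma/I_vH]\to\mathrm{Pic}(X(\Gamma/H,\mathcal{I}_H))\to0, \] fit into a commutative diagram with the following vertical maps: - multiplication by $\#H$ on $\mathbb{Z}$; - the map $\beta:\bigoplus_v\mathbb{Z}[\Gamma/I_v]\to\bigoplus_v\mathbb{Z}[\Gamma/I_vH]$, which is $\mathbb{Z}[\Gamma]$-linear and on the $v$-component sends $1$ to $\#(H\cap I_v)\cdot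 1$; - the natural projection $\bigoplus_v\mathbb{Z}[\Gamma/I_v]\to\bigoplus_v\mathbb{Z}[\Gamma/I_vH]$; - the surjection $\mathrm{Pic}(X(\Gamma,\mathcal{I}))\to\mathrm{Pic}(X(\Gamma/H,\mathcal{I}_H))$ induced by this projection.
   Context: Finite graphs are in Serre's formalism: vertex set $V_X$, edge set $\mathbb{E}_X$ with fixed-point-free involution $e\mapsto\bar e$, and maps $s,t$ with $s(\bar e)=t(e)$; $\mathbb{E}_{X,v}=\{e:s(e)=v\}$. For a finite connected graph $Y$, $\mathrm{Div}(Y)=\bigoplus_{w\in V_Y}\mathbb{Z}[w]$, $\mathcal{L}_Y([w])=\sum_{e\in\mathbb{E}_{Y,w}}([w]-[t(e)])$, and $\mathrm{Pic}(Y)=\mathrm{coker}\,\mathcal{L}_Y$. A voltage graph $(X,\Gamma,\alpha,\mathcal{I})$ consists of a finite graph $X$, a group $\Gamma$, a map $\alpha:\mathbb{E}_X\to\Gamma$ with $\alpha(\bar e)=\alpha(e)^{-1}$, and a family $\mathcal{I}=(I_v)_{v\in V_X}$ of subgroups of $\Gamma$. The derived graph $X(\Gamma,\mathcal{I})$ (for finite $\Gamma$) has vertex set $\coprod_v(\Gamma/I_v\times\{v\})$ and edge set $\Gamma\times\mathbb{E}_X$, with $s((\gamma,e))=(\gamma I_{s(e)},s(e))$, $t((\gamma,e))=(\gamma\alpha(e)I_{t(e)},t(e))$ and $\overline{(\gamma,e)}=(\gamma\alpha(e),\bar e)$; $\Gamma$ acts by left multiplication. For a normal subgroup $H$ with projection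 $\pi:\Gamma\to\Gamma/H$, the induced voltage graph is $(X,\Gamma/H,\pi\circ\alpha,(I_vH/H)_v)$. Let $\mathbb{Z}[\Gamma/I_v]=\mathbb{Z}[\Gamma]\otimes_{\mathbb{Z}[I_v]}\mathbb{Z}$. We identify $\mathrm{Div}(X(\Gamma,\mathcal{I}))\cong\bigoplus_{v\in V_X}\mathbb{Z}[\Gamma/I_v]$ as $\mathbb{Z}[\Gamma]$-modules via $(\gamma I_v,v)\leftrightarrow\gamma$ in the $v$-component. Then $\mathcal{L}_{X,\Gamma,\mathcal{I}}$ is the endomorphism corresponding to $\mathcal{L}_{X(\Gamma,\mathcal{I})}$ under this identification, and similarly for $\Gamma/H$, where $(\Gamma/H)/(I_vH/H)$ is identified with $\Gamma/I_vH$. *)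

theory Defs
  imports "HOL-Algebra.Coset" "HOL-Library.Function_Algebras"
begin

record ('v, 'e) sgraph =
  sverts :: "'v set"
  sedges :: "'e set"
  sbar   :: "'e \<Rightarrow> 'e"
  ssrc   :: "'e \<Rightarrow> 'v"
  stgt   :: "'e \<Rightarrow> 'v"

definition serre_graph :: "('v, 'e) sgraph \<Rightarrow> bool" where
  "serre_graph Y \<longleftrightarrow> finite (sverts Y) \<and> finite (sedges Y) \<and>
     (\<forall>e\<in>sedges Y. sbar Y e \<in> sedges Y \<and> sbar Y e \<noteq> e \<and> sbar Y (sbar Y e) = e \<and>
        ssrc Y e \<in> sverts Y \<and> stgt Y e \<in> sverts Y \<and> ssrc Y (sbar Y e) = stgt Y e)"

definition out_edges :: "('v, 'e) sgraph \<Rightarrow> 'v \<Rightarrow> 'e set" where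
  "out_edges Y w = {e \<in> sedges Y. ssrc Y e = w}"

definition edge_rel :: "('v, 'e) sgraph \<Rightarrow> ('v \<times> 'v) set" where
  "edge_rel Y = (\<lambda>e. (ssrc Y e, stgt Y e)) ` sedges Y"

definition connected_graph :: "('v, 'e) sgraph \<Rightarrow> bool" where
  "connected_graph Y \<longleftrightarrow> sverts Y \<noteq> {} \<and>
     (\<forall>u\<in>sverts Y. \<forall>w\<in>sverts Y. (u, w) \<in> (edge_rel Y)\<^sup>*)"

text \<open>Div(Y) = free abelian group on the vertices, as finitely supported integer functions
  vanishing off the vertex set.\<close>
definition divisors :: "('v, 'e) sgraph \<Rightarrow> ('v \<Rightarrow> int) set" where
  "divisors Y = {D. \<forall>w. w \<notin> sverts Y \<longrightarrow> D w = 0}"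

definition unit_div :: "'v \<Rightarrow> ('v \<Rightarrow> int)" where
  "unit_div x = (\<lambda>y. if y = x then 1 else 0)"

definition laplacian :: "('v, 'e) sgraph \<Rightarrow> ('v \<Rightarrow> int) \<Rightarrow> ('v \<Rightarrow> int)" where
  "laplacian Y D = (\<lambda>u. \<Sum>w\<in>sverts Y. D w *
       (\<Sum>e\<in>out_edges Y w. (of_bool (u = w) - of_bool (u = stgt Y e))))"

text \<open>Pic(Y) = coker of the Laplacian; elements are the cosets D + im(L).\<close>
definition pic_class :: "('v, 'e) sgraph \<Rightarrow> ('v \<Rightarrow> int) \<Rightarrow> ('v \<Rightarrow> int) set" where
  "pic_class Y D = {D' \<in> divisors Y. D' - D \<in> laplacian Y ` divisors Y}"

definition pic :: "('v, 'e) sgraph \<Rightarrow> ('v \<Rightarrow> int) set set" where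
  "pic Y = pic_class Y ` divisors Y"

text \<open>The element 1 of Z mapped to the sum of all vertices, scaled by n.\<close>
definition const_div :: "('v, 'e) sgraph \<Rightarrow> int \<Rightarrow> ('v \<Rightarrow> int)" where
  "const_div Y n = (\<lambda>x. if x \<in> sverts Y then n else 0)"

definition pushforward :: "('v, 'e) sgraph \<Rightarrow> ('v \<Rightarrow> 'w) \<Rightarrow> ('v \<Rightarrow> int) \<Rightarrow> ('w \<Rightarrow> int)" where
  "pushforward Y f D = (\<lambda>y. \<Sum>x\<in>{x \<in> sverts Y. f x = y}. D x)"

definition voltage_graph ::
  "('v, 'e) sgraph \<Rightarrow> ('g, 'b) monoid_scheme \<Rightarrow> ('e \<Rightarrow> 'g) \<Rightarrow> ('v \<Rightarrow> 'g set) \<Rightarrow> bool" where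
  "voltage_graph X G \<alpha> I \<longleftrightarrow> serre_graph X \<and> group G \<and>
     (\<forall>e\<in>sedges X. \<alpha> e \<in> carrier G \<and> \<alpha> (sbar X e) = inv\<^bsub>G\<^esub> (\<alpha> e)) \<and>
     (\<forall>v\<in>sverts X. subgroup (I v) G)"

text \<open>Vertex (gamma I_v, v) is represented as the pair (left coset, v).\<close>
definition derived_verts ::
  "('v, 'e) sgraph \<Rightarrow> ('g, 'b) monoid_scheme \<Rightarrow> ('v \<Rightarrow> 'g set) \<Rightarrow> ('g set \<times> 'v) set" where
  "derived_verts X G I = {(\<gamma> <#\<^bsub>G\<^esub> I v, v) | \<gamma> v. \<gamma> \<in> carrier G \<and> v \<in> sverts X}"

definition derived_graph ::
  "('v, 'e) sgraph \<Rightarrow> ('g, 'b) monoid_scheme \<Rightarrow> ('e \<Rightarrow> 'g) \<Rightarrow> ('v \<Rightarrow> 'g set)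
     \<Rightarrow> ('g set \<times> 'v, 'g \<times> 'e) sgraph" where
  "derived_graph X G \<alpha> I =
     \<lparr> sverts = derived_verts X G I,
       sedges = carrier G \<times> sedges X,
       sbar = (\<lambda>(\<gamma>, e). (\<gamma> \<otimes>\<^bsub>G\<^esub> \<alpha> e, sbar X e)),
       ssrc = (\<lambda>(\<gamma>, e). (\<gamma> <#\<^bsub>G\<^esub> I (ssrc X e), ssrc X e)),
       stgt = (\<lambda>(\<gamma>, e). ((\<gamma> \<otimes>\<^bsub>G\<^esub> \<alpha> e) <#\<^bsub>G\<^esub> I (stgt X e), stgt X e)) \<rparr>"

text \<open>Left-multiplication action of Gamma on Div(X(Gamma,I)) = \<Oplus>_v Z[Gamma/I_v]:
  (gamma . D)(x) = D(gamma^{-1} x).\<close>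
definition div_act ::
  "('g, 'b) monoid_scheme \<Rightarrow> ('v, 'e) sgraph \<Rightarrow> ('v \<Rightarrow> 'g set) \<Rightarrow> 'g
     \<Rightarrow> ('g set \<times> 'v \<Rightarrow> int) \<Rightarrow> ('g set \<times> 'v \<Rightarrow> int)" where
  "div_act G X I \<gamma> D =
     (\<lambda>x. if x \<in> derived_verts X G I then D (inv\<^bsub>G\<^esub> \<gamma> <#\<^bsub>G\<^esub> fst x, snd x) else 0)"

text \<open>A map from Div(X(G,I)) to Div(X(K,J)) that is additive and equivariant along the
  group map phi : G \<rightarrow> K (i.e. Z[G]-linear, K viewed as a G-module via phi).\<close>
definition zg_linear ::
  "('v, 'e) sgraph \<Rightarrow> ('g, 'b) monoid_scheme \<Rightarrow> ('v \<Rightarrow> 'g set)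
   \<Rightarrow> ('k, 'c) monoid_scheme \<Rightarrow> ('v \<Rightarrow> 'k set) \<Rightarrow> ('g \<Rightarrow> 'k)
   \<Rightarrow> (('g set \<times> 'v \<Rightarrow> int) \<Rightarrow> ('k set \<times> 'v \<Rightarrow> int)) \<Rightarrow> bool" where
  "zg_linear X G I K J \<phi> f \<longleftrightarrow>
     (\<forall>D. (\<forall>x. x \<notin> derived_verts X G I \<longrightarrow> D x = 0) \<longrightarrow>
          (\<forall>y. y \<notin> derived_verts X K J \<longrightarrow> f D y = 0)) \<and>
     (\<forall>D D'. (\<forall>x. x \<notin> derived_verts X G I \<longrightarrow> D x = 0) \<longrightarrow>
             (\<forall>x. x \<notin> derived_verts X G I \<longrightarrow> D' x = 0) \<longrightarrow> f (D + D') = f D + f D') \<and>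
     (\<forall>\<gamma>\<in>carrier G. \<forall>D. (\<forall>x. x \<notin> derived_verts X G I \<longrightarrow> D x = 0) \<longrightarrow>
          f (div_act G X I \<gamma> D) = div_act K X J (\<phi> \<gamma>) (f D))"

definition pic_exact_seq ::
  "('v, 'e) sgraph \<Rightarrow> ('g, 'b) monoid_scheme \<Rightarrow> ('e \<Rightarrow> 'g) \<Rightarrow> ('v \<Rightarrow> 'g set) \<Rightarrow> bool" where
  "pic_exact_seq X G \<alpha> I \<longleftrightarrow>
    (let Y = derived_graph X G \<alpha> I in
      \<comment> \<open>first map Z \<rightarrow> Div: Z[Gamma]-linear (Z with trivial action) and injective\<close>
      (\<forall>n. const_div Y n \<in> divisors Y) \<and>
      (\<forall>\<gamma>\<in>carrier G. \<forall>n. div_act G X I \<gamma> (const_div Y n) = const_div Y n) \<and>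
      inj (const_div Y) \<and>
      \<comment> \<open>Laplacian is Z[Gamma]-linear; exactness at the first Div\<close>
      zg_linear X G I G I id (laplacian Y) \<and>
      {D \<in> divisors Y. laplacian Y D = 0} = range (const_div Y) \<and>
      \<comment> \<open>exactness at the second Div and at Pic; Gamma-action descends to Pic\<close>
      {D \<in> divisors Y. pic_class Y D = pic_class Y 0} = laplacian Y ` divisors Y \<and>
      pic_class Y ` divisors Y = pic Y \<and>
      (\<forall>\<gamma>\<in>carrier G. \<forall>D\<in>divisors Y. \<forall>D'\<in>divisors Y.
          pic_class Y D = pic_class Y D' \<longrightarrow>
          pic_class Y (div_act G X I \<gamma> D) = pic_class Y (div_act G X I \<gamma> D')))"

text \<open>Induced voltage graph (X, Gamma/H, pi o alpha, (I_v H / H)_v);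
  pi(a) = H a (right coset) and I_v H / H = pi(I_v).\<close>
definition ind_volt :: "('g, 'b) monoid_scheme \<Rightarrow> 'g set \<Rightarrow> ('e \<Rightarrow> 'g) \<Rightarrow> ('e \<Rightarrow> 'g set)" where
  "ind_volt G H \<alpha> = (\<lambda>e. H #>\<^bsub>G\<^esub> \<alpha> e)"

definition ind_sub :: "('g, 'b) monoid_scheme \<Rightarrow> 'g set \<Rightarrow> ('v \<Rightarrow> 'g set) \<Rightarrow> ('v \<Rightarrow> 'g set set)" where
  "ind_sub G H I = (\<lambda>v. (\<lambda>a. H #>\<^bsub>G\<^esub> a) ` I v)"

text \<open>Natural map on vertices: (gamma I_v, v) \<mapsto> (pi(gamma) (I_v H/H), v) = (pi(gamma I_v), v).\<close>
definition vproj :: "('g, 'b) monoid_scheme \<Rightarrow> 'g set \<Rightarrow> ('g set \<times> 'v) \<Rightarrow> ('g set set \<times> 'v)" where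
  "vproj G H = (\<lambda>(C, v). ((\<lambda>a. H #>\<^bsub>G\<^esub> a) ` C, v))"

definition proj_div ::
  "('v, 'e) sgraph \<Rightarrow> ('g, 'b) monoid_scheme \<Rightarrow> ('e \<Rightarrow> 'g) \<Rightarrow> ('v \<Rightarrow> 'g set) \<Rightarrow> 'g set
     \<Rightarrow> ('g set \<times> 'v \<Rightarrow> int) \<Rightarrow> ('g set set \<times> 'v \<Rightarrow> int)" where
  "proj_div X G \<alpha> I H = pushforward (derived_graph X G \<alpha> I) (vproj G H)"

definition beta_div ::
  "('v, 'e) sgraph \<Rightarrow> ('g, 'b) monoid_scheme \<Rightarrow> ('e \<Rightarrow> 'g) \<Rightarrow> ('v \<Rightarrow> 'g set) \<Rightarrow> 'g set
     \<Rightarrow> ('g set \<times> 'v \<Rightarrow> int) \<Rightarrow> ('g set set \<times> 'v \<Rightarrow> int)" where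
  "beta_div X G \<alpha> I H D =
     (\<lambda>y. int (card (H \<inter> I (snd y))) * proj_div X G \<alpha> I H D y)"

definition pic_diagram ::
  "('v, 'e) sgraph \<Rightarrow> ('g, 'b) monoid_scheme \<Rightarrow> ('e \<Rightarrow> 'g) \<Rightarrow> ('v \<Rightarrow> 'g set) \<Rightarrow> 'g set \<Rightarrow> bool" where
  "pic_diagram X G \<alpha> I H \<longleftrightarrow>
    (let Y = derived_graph X G \<alpha> I;
         Q = G Mod H; \<alpha>' = ind_volt G H \<alpha>; I' = ind_sub G H I;
         Y' = derived_graph X Q \<alpha>' I';
         \<pi> = (\<lambda>\<gamma>. H #>\<^bsub>G\<^esub> \<gamma>);
         \<beta> = beta_div X G \<alpha> I H; p = proj_div X G \<alpha> I H in
      \<comment> \<open>the vertical maps beta and p are Z[Gamma]-linear\<close>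
      zg_linear X G I Q I' \<pi> \<beta> \<and>
      zg_linear X G I Q I' \<pi> p \<and>
      \<comment> \<open>beta sends 1 of the v-component to #(H \<inter> I_v) \<cdot> 1\<close>
      (\<forall>v\<in>sverts X. \<beta> (unit_div (I v, v)) = (\<lambda>y. int (card (H \<inter> I v)) * unit_div (I' v, v) y)) \<and>
      \<comment> \<open>left square: multiplication by #H on Z\<close>
      (\<forall>n. \<beta> (const_div Y n) = const_div Y' (int (card H) * n)) \<and>
      \<comment> \<open>middle square\<close>
      (\<forall>D\<in>divisors Y. p (laplacian Y D) = laplacian Y' (\<beta> D)) \<and>
      \<comment> \<open>right square: the map on Pic induced by p, which is surjective\<close>
      (\<exists>f. (\<forall>D\<in>divisors Y. f (pic_class Y D) = pic_class Y' (p D)) \<and> f ` pic Y = pic Y'))"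

end

theory Submission
  imports Defs "HOL-Algebra.Left_Coset"
begin

(* The kernel of the Laplacian of a connected graph consists of the constant divisors (maximum
   principle), and Pic is its cokernel by definition, which gives the exact sequence.
   Both the Gamma-equivariance of the Laplacian and the middle square of the diagram are instances
   of one identity: pushing L D forward along a graph morphism gives L' B, where B at the source
   of an edge e' is the sum of D over the sources of the edges above e'. For the projection
   X(Gamma, I) -> X(Gamma/H, I_H), the edges above (H d, e) are the (d', e) with d' in H d, and
   the map d' |-> d' I_v hits every vertex of the fibre exactly #(H \<inter> I_v) times; this is
   where beta comes from. Surjectivity of the projection on vertices gives the surjection on Pic
   and the connectedness of the quotient graph. *)

section \<open>Laplacians and Picard groups of Serre graphs\<close>

lemma serre_graph_finite:
  assumes "serre_graph Y"
  shows "finite (sverts Y)" "finite (sedges Y)"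
  using assms unfolding serre_graph_def by auto

lemma serre_graph_edge:
  assumes "serre_graph Y" "e \<in> sedges Y"
  shows "sbar Y e \<in> sedges Y" "sbar Y (sbar Y e) = e" "ssrc Y e \<in> sverts Y"
    "stgt Y e \<in> sverts Y" "ssrc Y (sbar Y e) = stgt Y e" "stgt Y (sbar Y e) = ssrc Y e"
  using assms unfolding serre_graph_def by metis+

lemma laplacian_eq_sum_edges:
  assumes "serre_graph Y"
  shows "laplacian Y D u =
    (\<Sum>e\<in>sedges Y. D (ssrc Y e) * (of_bool (u = ssrc Y e) - of_bool (u = stgt Y e)))"
proof -
  have "laplacian Y D u = (\<Sum>w\<in>sverts Y. \<Sum>e\<in>{e\<in>sedges Y. ssrc Y e = w}.
          D (ssrc Y e) * (of_bool (u = ssrc Y e) - of_bool (u = stgt Y e)))"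
    unfolding laplacian_def out_edges_def by (auto simp: sum_distrib_left intro!: sum.cong)
  also have "\<dots> = (\<Sum>e\<in>sedges Y. D (ssrc Y e) * (of_bool (u = ssrc Y e) - of_bool (u = stgt Y e)))"
    using assms serre_graph_finite[OF assms] serre_graph_edge[OF assms]
    by (intro sum.group) auto
  finally show ?thesis .
qed

lemma laplacian_eq_sum_out_edges:
  assumes "serre_graph Y"
  shows "laplacian Y D u = (\<Sum>e\<in>out_edges Y u. D u - D (stgt Y e))"
proof -
  note edge = serre_graph_edge[OF assms]
  have "bij_betw (sbar Y) (sedges Y) (sedges Y)"
    by (rule bij_betw_byWitness[where f' = "sbar Y"]) (auto simp: edge)
  then have reversed: "(\<Sum>e\<in>sedges Y. D (ssrc Y e) * of_bool (u = stgt Y e))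
      = (\<Sum>e\<in>sedges Y. D (stgt Y e) * of_bool (u = ssrc Y e))"
    by (subst sum.reindex_bij_betw[symmetric]) (auto simp: edge intro!: sum.cong)
  have "laplacian Y D u = (\<Sum>e\<in>sedges Y. D (ssrc Y e) * of_bool (u = ssrc Y e))
      - (\<Sum>e\<in>sedges Y. D (ssrc Y e) * of_bool (u = stgt Y e))"
    by (simp add: laplacian_eq_sum_edges[OF assms] right_diff_distrib sum_subtractf)
  also have "\<dots> = (\<Sum>e\<in>sedges Y. if ssrc Y e = u then D u - D (stgt Y e) else 0)"
    unfolding reversed sum_subtractf[symmetric] by (rule sum.cong) auto
  also have "\<dots> = (\<Sum>e\<in>out_edges Y u. D u - D (stgt Y e))"
    using serre_graph_finite[OF assms] by (simp add: out_edges_def sum.inter_filter)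
  finally show ?thesis .
qed

lemma laplacian_add: "laplacian Y (D + D') = laplacian Y D + laplacian Y D'"
  unfolding laplacian_def by (auto simp: distrib_right sum.distrib)

lemma laplacian_diff: "laplacian Y (D - D') = laplacian Y D - laplacian Y D'"
  unfolding laplacian_def by (auto simp: left_diff_distrib sum_subtractf)

lemma divisors_add: "D \<in> divisors Y \<Longrightarrow> D' \<in> divisors Y \<Longrightarrow> D + D' \<in> divisors Y"
  and divisors_diff: "D \<in> divisors Y \<Longrightarrow> D' \<in> divisors Y \<Longrightarrow> D - D' \<in> divisors Y"
  and zero_in_divisors: "0 \<in> divisors Y"
  and const_div_in_divisors: "const_div Y n \<in> divisors Y"
  unfolding divisors_def const_div_def by auto

lemma laplacian_in_divisors:
  assumes "serre_graph Y"
  shows "laplacian Y D \<in> divisors Y"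
proof -
  have "out_edges Y w = {}" if "w \<notin> sverts Y" for w
    using serre_graph_edge[OF assms] that by (auto simp: out_edges_def)
  then show ?thesis
    by (simp add: divisors_def laplacian_eq_sum_out_edges[OF assms])
qed

lemma laplacian_const_div:
  assumes "serre_graph Y"
  shows "laplacian Y (const_div Y n) = 0"
proof
  fix u
  have "const_div Y n u = const_div Y n (stgt Y e)" if "e \<in> out_edges Y u" for e
    using serre_graph_edge[OF assms] that by (auto simp: out_edges_def const_div_def)
  then show "laplacian Y (const_div Y n) u = 0 u"
    by (simp add: laplacian_eq_sum_out_edges[OF assms])
qed

text \<open>Maximum principle: at a vertex where D is maximal, L D = 0 forces D to take the same
  value at all neighbours; by connectedness D is constant.\<close>
lemma laplacian_eq_0_imp_const_div:
  assumes Y: "serre_graph Y" and con: "connected_graph Y"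
    and D: "D \<in> divisors Y" and L: "laplacian Y D = 0"
  shows "D \<in> range (const_div Y)"
proof -
  have fin: "finite (sverts Y)" and ne: "sverts Y \<noteq> {}"
    using serre_graph_finite[OF Y] con by (auto simp: connected_graph_def)
  define M where "M = Max (D ` sverts Y)"
  have le_M: "D w \<le> M" if "w \<in> sverts Y" for w
    unfolding M_def using fin that by simp
  have "M \<in> D ` sverts Y"
    unfolding M_def using fin ne by simp
  then obtain m where m: "m \<in> sverts Y" "D m = M" by auto
  have step: "D w' = M" if ww': "(w, w') \<in> edge_rel Y" and w: "D w = M" for w w'
  proof -
    obtain e where e: "e \<in> out_edges Y w" "stgt Y e = w'"
      using ww' by (auto simp: edge_rel_def out_edges_def)
    have fin_out: "finite (out_edges Y w)"
      using serre_graph_finite[OF Y] by (simp add: out_edges_def)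
    have nonneg: "0 \<le> M - D (stgt Y e)" if "e \<in> out_edges Y w" for e
      using le_M serre_graph_edge[OF Y] that by (auto simp: out_edges_def)
    have "(\<Sum>e\<in>out_edges Y w. M - D (stgt Y e)) = 0"
      using L laplacian_eq_sum_out_edges[OF Y, of D w] w by (simp add: fun_eq_iff)
    then show ?thesis
      using sum_nonneg_eq_0_iff[OF fin_out nonneg] e by auto
  qed
  have "D w = M" if "(m, w) \<in> (edge_rel Y)\<^sup>*" for w
    using that by induction (use m step in auto)
  then have "D = const_div Y M"
    using con m(1) D by (auto simp: fun_eq_iff connected_graph_def const_div_def divisors_def)
  then show ?thesis by simp
qed

lemma pic_class_eq_iff:
  assumes "D \<in> divisors Y" "D' \<in> divisors Y"
  shows "pic_class Y D = pic_class Y D' \<longleftrightarrow> D - D' \<in> laplacian Y ` divisors Y"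
proof
  have "D - D \<in> laplacian Y ` divisors Y"
    using zero_in_divisors laplacian_diff[of Y 0 0] by force
  moreover assume "pic_class Y D = pic_class Y D'"
  ultimately show "D - D' \<in> laplacian Y ` divisors Y"
    using assms(1) by (auto simp: pic_class_def set_eq_iff)
next
  assume "D - D' \<in> laplacian Y ` divisors Y"
  then obtain E where E: "E \<in> divisors Y" "D - D' = laplacian Y E" by auto
  have "F - D' \<in> laplacian Y ` divisors Y \<longleftrightarrow> F - D \<in> laplacian Y ` divisors Y" for F
  proof
    assume "F - D' \<in> laplacian Y ` divisors Y"
    then obtain E' where "E' \<in> divisors Y" "F - D' = laplacian Y E'" by auto
    then show "F - D \<in> laplacian Y ` divisors Y"
      using E divisors_diff laplacian_diff[of Y E' E]
      by (intro image_eqI[of _ _ "E' - E"]) (auto simp: algebra_simps)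
  next
    assume "F - D \<in> laplacian Y ` divisors Y"
    then obtain E' where "E' \<in> divisors Y" "F - D = laplacian Y E'" by auto
    then show "F - D' \<in> laplacian Y ` divisors Y"
      using E divisors_add laplacian_add[of Y E' E]
      by (intro image_eqI[of _ _ "E' + E"]) (auto simp: algebra_simps)
  qed
  then show "pic_class Y D = pic_class Y D'"
    by (auto simp: pic_class_def)
qed

section \<open>Graph morphisms and push-forward of divisors\<close>

definition graph_hom ::
    "('v, 'e) sgraph \<Rightarrow> ('w, 'f) sgraph \<Rightarrow> ('v \<Rightarrow> 'w) \<Rightarrow> ('e \<Rightarrow> 'f) \<Rightarrow> bool"
  where "graph_hom Y Y' f \<phi> \<longleftrightarrow> (\<forall>e\<in>sedges Y. \<phi> e \<in> sedges Y' \<and>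
      ssrc Y' (\<phi> e) = f (ssrc Y e) \<and> stgt Y' (\<phi> e) = f (stgt Y e))"

lemma connected_graph_hom_image:
  assumes hom: "graph_hom Y Y' f \<phi>" and onto: "f ` sverts Y = sverts Y'"
    and con: "connected_graph Y"
  shows "connected_graph Y'"
proof -
  have edge: "(f a, f b) \<in> edge_rel Y'" if ab: "(a, b) \<in> edge_rel Y" for a b
  proof -
    obtain e where e: "e \<in> sedges Y" "a = ssrc Y e" "b = stgt Y e"
      using ab by (auto simp: edge_rel_def)
    then have "\<phi> e \<in> sedges Y'" "(f a, f b) = (ssrc Y' (\<phi> e), stgt Y' (\<phi> e))"
      using hom by (auto simp: graph_hom_def)
    then show ?thesis
      unfolding edge_rel_def by blast
  qed
  have path: "(f a, f b) \<in> (edge_rel Y')\<^sup>*" if "(a, b) \<in> (edge_rel Y)\<^sup>*" for a b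
    using that by (induction rule: rtrancl_induct) (auto intro: rtrancl_into_rtrancl edge)
  show ?thesis
    unfolding connected_graph_def
  proof (intro conjI ballI)
    show "sverts Y' \<noteq> {}"
      using onto con by (auto simp: connected_graph_def)
    fix u w assume "u \<in> sverts Y'" "w \<in> sverts Y'"
    then obtain a b where "a \<in> sverts Y" "b \<in> sverts Y" "u = f a" "w = f b"
      unfolding onto[symmetric] by blast
    then show "(u, w) \<in> (edge_rel Y')\<^sup>*"
      using path con by (simp add: connected_graph_def)
  qed
qed

lemma pushforward_add: "pushforward Y f (D + D') = pushforward Y f D + pushforward Y f D'"
  unfolding pushforward_def by (rule ext) (simp add: sum.distrib)

lemma pushforward_diff: "pushforward Y f (D - D') = pushforward Y f D - pushforward Y f D'"
  unfolding pushforward_def by (rule ext) (simp add: sum_subtractf)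

lemma pushforward_in_divisors:
  "f ` sverts Y \<subseteq> sverts Y' \<Longrightarrow> pushforward Y f D \<in> divisors Y'"
  unfolding pushforward_def divisors_def by (auto intro!: sum.neutral)

lemma pushforward_cong:
  "(\<And>x. x \<in> sverts Y \<Longrightarrow> f x = g x) \<Longrightarrow> pushforward Y f = pushforward Y g"
  unfolding pushforward_def by (intro ext sum.cong) auto

lemma pushforward_comp:
  assumes "finite (sverts Y)" "finite (sverts Y')" "f ` sverts Y \<subseteq> sverts Y'"
  shows "pushforward Y' g (pushforward Y f D) = pushforward Y (g \<circ> f) D"
proof
  fix z
  have "pushforward Y' g (pushforward Y f D) z
      = (\<Sum>y\<in>{y \<in> sverts Y'. g y = z}. \<Sum>x\<in>{x \<in> {x \<in> sverts Y. g (f x) = z}. f x = y}. D x)"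
    unfolding pushforward_def by (intro sum.cong) auto
  also have "\<dots> = pushforward Y (g \<circ> f) D z"
    unfolding pushforward_def comp_def using assms by (intro sum.group) auto
  finally show "pushforward Y' g (pushforward Y f D) z = pushforward Y (g \<circ> f) D z" .
qed

lemma pushforward_image_divisors:
  assumes fin: "finite (sverts Y)" and onto: "f ` sverts Y = sverts Y'"
  shows "pushforward Y f ` divisors Y = divisors Y'"
proof
  show "pushforward Y f ` divisors Y \<subseteq> divisors Y'"
    using pushforward_in_divisors[of f Y Y'] onto by auto
  show "divisors Y' \<subseteq> pushforward Y f ` divisors Y"
  proof
    fix D' assume D': "D' \<in> divisors Y'"
    let ?sec = "inv_into (sverts Y) f"
    define D where "D x = (if x \<in> sverts Y \<and> x = ?sec (f x) then D' (f x) else 0)" for x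
    have "pushforward Y f D y = D' y" for y
    proof (cases "y \<in> sverts Y'")
      case True
      then have sec: "?sec y \<in> sverts Y" "f (?sec y) = y"
        unfolding onto[symmetric] by (simp_all add: inv_into_into f_inv_into_f)
      have "pushforward Y f D y = (\<Sum>x\<in>{x \<in> sverts Y. f x = y}. if x = ?sec y then D' y else 0)"
        unfolding pushforward_def D_def by (rule sum.cong) auto
      also have "\<dots> = D' y"
        using fin sec by (simp add: sum.delta')
      finally show ?thesis .
    next
      case False
      then have "{x \<in> sverts Y. f x = y} = {}"
        using onto by blast
      then have "pushforward Y f D y = 0"
        by (simp only: pushforward_def sum.empty)
      then show ?thesis
        using False D' by (simp add: divisors_def)
    qed
    moreover have "D \<in> divisors Y"
      by (simp add: D_def divisors_def)
    ultimately show "D' \<in> pushforward Y f ` divisors Y"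
      by (intro image_eqI[of _ _ D]) auto
  qed
qed

lemma pushforward_laplacian:
  assumes Y: "serre_graph Y" and Y': "serre_graph Y'" and hom: "graph_hom Y Y' f \<phi>"
    and fibre: "\<And>e'. e' \<in> sedges Y' \<Longrightarrow>
      (\<Sum>e\<in>{e \<in> sedges Y. \<phi> e = e'}. D (ssrc Y e)) = B (ssrc Y' e')"
  shows "pushforward Y f (laplacian Y D) = laplacian Y' B"
proof
  fix y
  let ?h = "\<lambda>e'. of_bool (y = ssrc Y' e') - of_bool (y = stgt Y' e') :: int"
  note fin = serre_graph_finite[OF Y] serre_graph_finite[OF Y']
  have incidence: "(\<Sum>x\<in>{x \<in> sverts Y. f x = y}. of_bool (x = ssrc Y e) - of_bool (x = stgt Y e))
      = ?h (\<phi> e)" if "e \<in> sedges Y" for e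
    using that hom fin serre_graph_edge[OF Y that]
    by (simp add: graph_hom_def sum_subtractf sum.delta' eq_commute[of y])
  have "pushforward Y f (laplacian Y D) y = (\<Sum>e\<in>sedges Y. \<Sum>x\<in>{x \<in> sverts Y. f x = y}.
      D (ssrc Y e) * (of_bool (x = ssrc Y e) - of_bool (x = stgt Y e)))"
    unfolding pushforward_def laplacian_eq_sum_edges[OF Y] by (rule sum.swap)
  also have "\<dots> = (\<Sum>e\<in>sedges Y. D (ssrc Y e) * ?h (\<phi> e))"
    by (simp add: sum_distrib_left[symmetric] incidence)
  also have "\<dots> = (\<Sum>e'\<in>sedges Y'. \<Sum>e\<in>{e \<in> sedges Y. \<phi> e = e'}. D (ssrc Y e) * ?h (\<phi> e))"
    using hom fin by (intro sum.group[symmetric]) (auto simp: graph_hom_def)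
  also have "\<dots> = (\<Sum>e'\<in>sedges Y'. B (ssrc Y' e') * ?h e')"
    by (intro sum.cong refl) (simp add: sum_distrib_right[symmetric] fibre)
  also have "\<dots> = laplacian Y' B y"
    by (simp add: laplacian_eq_sum_edges[OF Y'])
  finally show "pushforward Y f (laplacian Y D) y = laplacian Y' B y" .
qed

lemma pic_class_pushforward_eq:
  assumes lap: "\<And>D. D \<in> divisors Y \<Longrightarrow>
      pushforward Y f (laplacian Y D) \<in> laplacian Y' ` divisors Y'"
    and into: "f ` sverts Y \<subseteq> sverts Y'"
    and D: "D \<in> divisors Y" "D' \<in> divisors Y" and eq: "pic_class Y D = pic_class Y D'"
  shows "pic_class Y' (pushforward Y f D) = pic_class Y' (pushforward Y f D')"
proof -
  obtain E where "E \<in> divisors Y" "D - D' = laplacian Y E"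
    using eq pic_class_eq_iff[OF D] by auto
  then have "pushforward Y f D - pushforward Y f D' \<in> laplacian Y' ` divisors Y'"
    using lap by (metis pushforward_diff)
  then show ?thesis
    using pic_class_eq_iff pushforward_in_divisors[OF into] by blast
qed

lemma pic_pushforward_onto:
  assumes lap: "\<And>D. D \<in> divisors Y \<Longrightarrow>
      pushforward Y f (laplacian Y D) \<in> laplacian Y' ` divisors Y'"
    and fin: "finite (sverts Y)" and onto: "f ` sverts Y = sverts Y'"
  shows "\<exists>F. (\<forall>D\<in>divisors Y. F (pic_class Y D) = pic_class Y' (pushforward Y f D)) \<and>
    F ` pic Y = pic Y'"
proof -
  define F where
    "F P = pic_class Y' (pushforward Y f (SOME D. D \<in> divisors Y \<and> pic_class Y D = P))" for P
  have F: "F (pic_class Y D) = pic_class Y' (pushforward Y f D)" if "D \<in> divisors Y" for D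
  proof -
    let ?D = "SOME D'. D' \<in> divisors Y \<and> pic_class Y D' = pic_class Y D"
    have "?D \<in> divisors Y \<and> pic_class Y ?D = pic_class Y D"
      by (rule someI[of _ D]) (simp add: that)
    then show ?thesis
      unfolding F_def using pic_class_pushforward_eq[OF lap] that onto by blast
  qed
  then have "F ` pic Y = pic_class Y' ` pushforward Y f ` divisors Y"
    by (simp add: pic_def image_image cong: image_cong)
  also have "\<dots> = pic Y'"
    by (simp add: pushforward_image_divisors[OF fin onto] pic_def)
  finally show ?thesis
    using F by blast
qed

section \<open>Cosets modulo a normal subgroup\<close>

context normal
begin

lemma rcos_absorb: "h \<in> H \<Longrightarrow> x \<in> carrier G \<Longrightarrow> H #> (h \<otimes> x) = H #> x"
  by (metis coset_mult_assoc mem_carrier rcos_const subset is_group)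

lemma rcos_mem_iff:
  assumes "d0 \<in> carrier G"
  shows "d \<in> H #> d0 \<longleftrightarrow> d \<in> carrier G \<and> H #> d = H #> d0"
proof
  assume d: "d \<in> H #> d0"
  then show "d \<in> carrier G \<and> H #> d = H #> d0"
    using r_coset_subset_G[OF subset assms] repr_independence[OF d assms is_subgroup] by auto
next
  assume "d \<in> carrier G \<and> H #> d = H #> d0"
  then show "d \<in> H #> d0"
    using rcos_self[OF _ is_subgroup, of d] by simp
qed

lemma lcos_fibre_in_rcos:
  assumes K: "subgroup K G" and d1: "d1 \<in> carrier G"
  shows "{d \<in> H #> d1. d <# K = d1 <# K} = d1 <# (H \<inter> K)"
proof (intro equalityI subsetI)
  fix d assume "d \<in> {d \<in> H #> d1. d <# K = d1 <# K}"
  then have d: "d \<in> d1 <# H" "d <# K = d1 <# K"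
    using coset_eq d1 by auto
  then have "d \<in> carrier G"
    using l_coset_subset_G[OF subset d1] by blast
  then have "d \<in> d <# K"
    using K by (rule lcos_self)
  then have "d \<in> d1 <# K"
    using d(2) by simp
  then obtain k h where "k \<in> K" "d = d1 \<otimes> k" "h \<in> H" "d = d1 \<otimes> h"
    using d(1) unfolding l_coset_def by blast
  then show "d \<in> d1 <# (H \<inter> K)"
    using d1 K by (auto simp: l_coset_def subgroup.mem_carrier)
next
  fix d assume "d \<in> d1 <# (H \<inter> K)"
  then obtain k where k: "k \<in> H" "k \<in> K" "d = d1 \<otimes> k"
    unfolding l_coset_def by blast
  then have "d \<in> H #> d1"
    using coset_eq d1 unfolding l_coset_def by blast
  moreover have "d1 <# K = d <# K"
    using k d1 K by (intro l_repr_independence) (auto simp: l_coset_def)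
  ultimately show "d \<in> {d \<in> H #> d1. d <# K = d1 <# K}" by simp
qed

text \<open>Both sides say that b \<in> H d0 K.\<close>
lemma rcos_image_lcos_eq_iff:
  assumes K: "subgroup K G" and b: "b \<in> carrier G" and d0: "d0 \<in> carrier G"
  shows "(\<lambda>a. H #> a) ` (b <# K) = (\<lambda>a. H #> a) ` (d0 <# K) \<longleftrightarrow>
    (\<exists>d\<in>H #> d0. b <# K = d <# K)"
proof
  assume eq: "(\<lambda>a. H #> a) ` (b <# K) = (\<lambda>a. H #> a) ` (d0 <# K)"
  have "H #> b \<in> (\<lambda>a. H #> a) ` (d0 <# K)"
    using lcos_self[OF b K] eq by blast
  then obtain c where c: "c \<in> d0 <# K" "H #> b = H #> c"
    by blast
  obtain a where a: "a \<in> K" "c = d0 \<otimes> a"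
    using c(1) by (auto simp: l_coset_def)
  have a_carr: "a \<in> carrier G"
    by (rule subgroup.mem_carrier[OF K a(1)])
  let ?d = "b \<otimes> inv a"
  have "H #> ?d = (H #> b) #> inv a"
    using a_carr b by (simp add: coset_mult_assoc subset)
  also have "\<dots> = (H #> (d0 \<otimes> a)) #> inv a"
    using c(2) a(2) by simp
  also have "\<dots> = H #> d0"
    using a_carr d0 by (simp add: coset_mult_assoc subset m_assoc)
  finally have "?d \<in> H #> d0"
    using rcos_self[OF _ is_subgroup, of ?d] a_carr b by simp
  moreover have "b <# K = ?d <# K"
    using a a_carr b K by (intro l_repr_independence)
      (auto simp: l_coset_def subgroup.m_inv_closed)
  ultimately show "\<exists>d\<in>H #> d0. b <# K = d <# K" by blast
next
  assume "\<exists>d\<in>H #> d0. b <# K = d <# K"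
  then obtain h where h: "h \<in> H" "b <# K = (h \<otimes> d0) <# K"
    by (auto simp: r_coset_def)
  have absorb: "H #> (h \<otimes> d0 \<otimes> k) = H #> (d0 \<otimes> k)" if "k \<in> K" for k
  proof -
    have "k \<in> carrier G"
      by (rule subgroup.mem_carrier[OF K that])
    then have "h \<otimes> d0 \<otimes> k = h \<otimes> (d0 \<otimes> k)"
      using h(1) d0 by (simp add: m_assoc mem_carrier)
    then show ?thesis
      using h(1) d0 \<open>k \<in> carrier G\<close> by (simp add: rcos_absorb)
  qed
  have "(\<lambda>a. H #> a) ` (b <# K) = (\<lambda>a. H #> a) ` ((h \<otimes> d0) <# K)"
    using h(2) by simp
  also have "\<dots> = (\<lambda>a. H #> a) ` (d0 <# K)"
    unfolding l_coset_def image_UN by (simp add: absorb)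
  finally show "(\<lambda>a. H #> a) ` (b <# K) = (\<lambda>a. H #> a) ` (d0 <# K)" .
qed

end

section \<open>Derived graphs\<close>

locale finite_voltage_graph = group G for G :: "('g, 'b) monoid_scheme" (structure) +
  fixes X :: "('v, 'e) sgraph" and \<alpha> :: "'e \<Rightarrow> 'g" and I :: "'v \<Rightarrow> 'g set"
  assumes serre_X: "serre_graph X"
    and voltage_closed: "e \<in> sedges X \<Longrightarrow> \<alpha> e \<in> carrier G"
    and voltage_bar: "e \<in> sedges X \<Longrightarrow> \<alpha> (sbar X e) = inv (\<alpha> e)"
    and subgroup_I: "v \<in> sverts X \<Longrightarrow> subgroup (I v) G"
    and finite_carrier: "finite (carrier G)"

lemma finite_voltage_graphI:
  "voltage_graph X G \<alpha> I \<Longrightarrow> finite (carrier G) \<Longrightarrow> finite_voltage_graph G X \<alpha> I"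
  unfolding voltage_graph_def finite_voltage_graph_def finite_voltage_graph_axioms_def by blast

context finite_voltage_graph
begin

abbreviation "Y \<equiv> derived_graph X G \<alpha> I"
abbreviation "V \<equiv> derived_verts X G I"

lemma I_subset_carrier: "v \<in> sverts X \<Longrightarrow> I v \<subseteq> carrier G"
  by (rule subgroup.subset[OF subgroup_I])

lemma derived_graph_simps:
  "sverts Y = V" "sedges Y = carrier G \<times> sedges X"
  "ssrc Y (g, e) = (g <# I (ssrc X e), ssrc X e)"
  "stgt Y (g, e) = ((g \<otimes> \<alpha> e) <# I (stgt X e), stgt X e)"
  "sbar Y (g, e) = (g \<otimes> \<alpha> e, sbar X e)"
  unfolding derived_graph_def by simp_all

lemma derived_vertsI: "g \<in> carrier G \<Longrightarrow> v \<in> sverts X \<Longrightarrow> (g <# I v, v) \<in> V"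
  unfolding derived_verts_def by blast

lemma derived_vertsE:
  assumes "x \<in> V"
  obtains g v where "x = (g <# I v, v)" "g \<in> carrier G" "v \<in> sverts X"
  using assms unfolding derived_verts_def by blast

lemma finite_derived_verts: "finite V"
proof -
  have "V = (\<lambda>(g, v). (g <# I v, v)) ` (carrier G \<times> sverts X)"
    unfolding derived_verts_def by auto
  then show ?thesis
    using finite_carrier serre_graph_finite[OF serre_X] by simp
qed

lemma serre_derived_graph: "serre_graph Y"
  unfolding serre_graph_def
proof (intro conjI ballI)
  show "finite (sverts Y)" "finite (sedges Y)"
    using finite_derived_verts finite_carrier serre_graph_finite[OF serre_X]
    by (simp_all add: derived_graph_simps)
  fix x assume "x \<in> sedges Y"
  then obtain g e where x: "x = (g, e)" "g \<in> carrier G" "e \<in> sedges X"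
    by (auto simp: derived_graph_simps)
  note edge = serre_graph_edge[OF serre_X x(3)]
  have "g \<otimes> \<alpha> e \<otimes> \<alpha> (sbar X e) = g"
    using x voltage_closed voltage_bar by (simp add: m_assoc)
  then show "sbar Y x \<in> sedges Y" "sbar Y x \<noteq> x" "sbar Y (sbar Y x) = x"
    "ssrc Y x \<in> sverts Y" "stgt Y x \<in> sverts Y" "ssrc Y (sbar Y x) = stgt Y x"
    using x edge voltage_closed serre_X
    by (auto simp: derived_graph_simps derived_vertsI serre_graph_def)
qed

definition vert_act :: "'g \<Rightarrow> 'g set \<times> 'v \<Rightarrow> 'g set \<times> 'v"
  where "vert_act g x = (g <# fst x, snd x)"

lemma vert_act_closed: "g \<in> carrier G \<Longrightarrow> x \<in> V \<Longrightarrow> vert_act g x \<in> V"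
  by (auto elim!: derived_vertsE simp: vert_act_def lcos_m_assoc I_subset_carrier intro!: derived_vertsI)

lemma vert_act_mult:
  "g \<in> carrier G \<Longrightarrow> h \<in> carrier G \<Longrightarrow> x \<in> V \<Longrightarrow>
    vert_act g (vert_act h x) = vert_act (g \<otimes> h) x"
  by (auto elim!: derived_vertsE
      simp: vert_act_def lcos_m_assoc I_subset_carrier l_coset_subset_G m_assoc)

lemma vert_act_one: "x \<in> V \<Longrightarrow> vert_act \<one> x = x"
  by (auto elim!: derived_vertsE simp: vert_act_def lcos_mult_one I_subset_carrier l_coset_subset_G)

lemma vert_act_inv_eq_iff:
  assumes "g \<in> carrier G" "x \<in> V" "y \<in> V"
  shows "vert_act g x = y \<longleftrightarrow> x = vert_act (inv g) y"
  using assms by (auto simp: vert_act_mult vert_act_one)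

lemma ssrc_translate:
  "g \<in> carrier G \<Longrightarrow> d \<in> carrier G \<Longrightarrow> e \<in> sedges X \<Longrightarrow>
    ssrc Y (g \<otimes> d, e) = vert_act g (ssrc Y (d, e))"
  by (simp add: derived_graph_simps vert_act_def lcos_m_assoc I_subset_carrier serre_graph_edge[OF serre_X])

lemma stgt_translate:
  "g \<in> carrier G \<Longrightarrow> d \<in> carrier G \<Longrightarrow> e \<in> sedges X \<Longrightarrow>
    stgt Y (g \<otimes> d, e) = vert_act g (stgt Y (d, e))"
  by (simp add: derived_graph_simps vert_act_def lcos_m_assoc I_subset_carrier serre_graph_edge[OF serre_X]
      voltage_closed m_assoc)

lemma graph_hom_translate: "g \<in> carrier G \<Longrightarrow> graph_hom Y Y (vert_act g) (\<lambda>(d, e). (g \<otimes> d, e))"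
  by (auto simp: graph_hom_def derived_graph_simps(2) ssrc_translate stgt_translate)

lemma div_act_eq: "div_act G X I g D x = (if x \<in> V then D (vert_act (inv g) x) else 0)"
  unfolding div_act_def vert_act_def by simp

lemma div_act_eq_pushforward:
  assumes g: "g \<in> carrier G"
  shows "div_act G X I g D = pushforward Y (vert_act g) D"
proof
  fix y
  show "div_act G X I g D y = pushforward Y (vert_act g) D y"
  proof (cases "y \<in> V")
    case True
    moreover have "vert_act (inv g) y \<in> V"
      using g True by (simp add: vert_act_closed)
    ultimately have "{x \<in> V. vert_act g x = y} = {vert_act (inv g) y}"
      using vert_act_inv_eq_iff[OF g _ True] by blast
    then show ?thesis
      using True by (simp add: div_act_eq pushforward_def derived_graph_simps)
  next
    case False
    then have "{x \<in> V. vert_act g x = y} = {}"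
      using g vert_act_closed by auto
    then have "pushforward Y (vert_act g) D y = 0"
      by (simp only: pushforward_def derived_graph_simps sum.empty)
    then show ?thesis
      using False by (simp add: div_act_eq)
  qed
qed

lemma pushforward_translate_laplacian:
  assumes g: "g \<in> carrier G"
  shows "pushforward Y (vert_act g) (laplacian Y D) = laplacian Y (div_act G X I g D)"
proof (rule pushforward_laplacian[OF serre_derived_graph serre_derived_graph graph_hom_translate[OF g]])
  fix e' assume "e' \<in> sedges Y"
  then obtain d e where e': "e' = (d, e)" "d \<in> carrier G" "e \<in> sedges X"
    by (auto simp: derived_graph_simps)
  have "{x \<in> sedges Y. (case x of (d, e) \<Rightarrow> (g \<otimes> d, e)) = e'} = {(inv g \<otimes> d, e)}"
    using g e' by (auto simp: derived_graph_simps m_assoc[symmetric])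
  moreover have "ssrc Y (inv g \<otimes> d, e) = vert_act (inv g) (ssrc Y e')"
    using g e' by (simp add: ssrc_translate)
  moreover have "ssrc Y e' \<in> V"
    using serre_graph_edge(3)[OF serre_derived_graph \<open>e' \<in> sedges Y\<close>]
    by (simp add: derived_graph_simps)
  ultimately show "(\<Sum>x\<in>{x \<in> sedges Y. (case x of (d, e) \<Rightarrow> (g \<otimes> d, e)) = e'}. D (ssrc Y x))
      = div_act G X I g D (ssrc Y e')"
    by (simp add: div_act_eq)
qed

lemma laplacian_div_act:
  "g \<in> carrier G \<Longrightarrow> laplacian Y (div_act G X I g D) = div_act G X I g (laplacian Y D)"
  by (simp add: div_act_eq_pushforward pushforward_translate_laplacian)

lemma div_act_in_divisors: "div_act G X I g D \<in> divisors Y"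
  by (simp add: divisors_def div_act_eq derived_graph_simps)

lemma pic_exact_seq_derived_graph:
  assumes con: "connected_graph Y"
  shows "pic_exact_seq X G \<alpha> I"
proof -
  note Y = serre_derived_graph
  have const_invariant: "div_act G X I g (const_div Y n) = const_div Y n" if "g \<in> carrier G" for g n
    using that by (auto simp: fun_eq_iff div_act_eq const_div_def derived_graph_simps vert_act_closed)
  obtain x0 where "x0 \<in> sverts Y"
    using con by (auto simp: connected_graph_def)
  then have inj: "inj (const_div Y)"
    by (intro injI) (metis const_div_def)
  have linear: "zg_linear X G I G I id (laplacian Y)"
    using laplacian_in_divisors[OF Y]
    by (auto simp: zg_linear_def divisors_def derived_graph_simps laplacian_add laplacian_div_act)
  have kernel: "{D \<in> divisors Y. laplacian Y D = 0} = range (const_div Y)"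
    using laplacian_eq_0_imp_const_div[OF Y con] laplacian_const_div[OF Y]
      const_div_in_divisors by auto
  have image: "{D \<in> divisors Y. pic_class Y D = pic_class Y 0} = laplacian Y ` divisors Y"
    using pic_class_eq_iff[OF _ zero_in_divisors] laplacian_in_divisors[OF Y] by auto
  have descends: "pic_class Y (div_act G X I g D) = pic_class Y (div_act G X I g D')"
    if g: "g \<in> carrier G" and "D \<in> divisors Y" "D' \<in> divisors Y"
      "pic_class Y D = pic_class Y D'" for g D D'
  proof -
    have lap: "pushforward Y (vert_act g) (laplacian Y E) \<in> laplacian Y ` divisors Y" for E
      unfolding pushforward_translate_laplacian[OF g] using div_act_in_divisors by blast
    have "vert_act g ` sverts Y \<subseteq> sverts Y"
      using g vert_act_closed by (auto simp: derived_graph_simps)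
    from pic_class_pushforward_eq[OF lap this that(2-4)] show ?thesis
      by (simp only: div_act_eq_pushforward[OF g])
  qed
  show ?thesis
    unfolding pic_exact_seq_def Let_def pic_def
    by (intro conjI allI ballI impI refl inj linear kernel image const_div_in_divisors
        const_invariant descends)
qed

end

section \<open>Quotient by a normal subgroup\<close>

locale voltage_graph_quotient = finite_voltage_graph G X \<alpha> I + normal H G
  for G :: "('g, 'b) monoid_scheme" (structure) and X \<alpha> I H

context voltage_graph_quotient
begin

abbreviation "Q \<equiv> G Mod H"
abbreviation "\<pi> \<equiv> (\<lambda>a. H #> a)"
abbreviation "I' \<equiv> ind_sub G H I"
abbreviation "\<alpha>' \<equiv> ind_volt G H \<alpha>"

lemma rcos_in_quotient: "a \<in> carrier G \<Longrightarrow> \<pi> a \<in> carrier Q"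
  by (simp add: carrier_FactGroup)

lemma quotient_carrierE:
  assumes "r \<in> carrier Q"
  obtains a where "a \<in> carrier G" "r = \<pi> a"
  using assms by (auto simp: carrier_FactGroup)

lemma quotient_inv: "a \<in> carrier G \<Longrightarrow> inv\<^bsub>Q\<^esub> (\<pi> a) = \<pi> (inv a)"
  by (simp add: inv_FactGroup rcos_in_quotient rcos_inv)

lemma quotient_lcos:
  assumes "a \<in> carrier G" "S \<subseteq> carrier G"
  shows "l_coset Q (\<pi> a) (\<pi> ` S) = \<pi> ` (a <# S)"
proof -
  have "l_coset Q (\<pi> a) (\<pi> ` S) = (\<lambda>s. \<pi> (a \<otimes> s)) ` S"
    using assms by (auto simp: l_coset_def rcos_sum subsetD)
  then show ?thesis
    by (auto simp: l_coset_def)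
qed

lemma finite_voltage_graph_quotient: "finite_voltage_graph Q X \<alpha>' I'"
proof (intro finite_voltage_graph.intro finite_voltage_graph_axioms.intro)
  show "group Q"
    by (rule factorgroup_is_group)
  then interpret \<pi>: group_hom G Q \<pi>
    by (intro group_hom.intro group_hom_axioms.intro is_group r_coset_hom_Mod)
  show "serre_graph X"
    by (rule serre_X)
  show "finite (carrier Q)"
    using finite_carrier by (simp add: carrier_FactGroup)
  show "subgroup (I' v) Q" if "v \<in> sverts X" for v
    using \<pi>.subgroup_img_is_subgroup[OF subgroup_I[OF that]] by (simp add: ind_sub_def)
  show "\<alpha>' e \<in> carrier Q" if "e \<in> sedges X" for e
    using that voltage_closed by (simp add: ind_volt_def rcos_in_quotient)
  show "\<alpha>' (sbar X e) = inv\<^bsub>Q\<^esub> (\<alpha>' e)" if "e \<in> sedges X" for e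
    by (simp only: ind_volt_def voltage_bar[OF that] quotient_inv[OF voltage_closed[OF that]])
qed

sublocale q: finite_voltage_graph Q X \<alpha>' I'
  by (rule finite_voltage_graph_quotient)

lemma vproj_derived_vert:
  "a \<in> carrier G \<Longrightarrow> v \<in> sverts X \<Longrightarrow>
    vproj G H (a <# I v, v) = (l_coset Q (\<pi> a) (I' v), v)"
  by (simp add: vproj_def ind_sub_def quotient_lcos I_subset_carrier)

lemma vproj_image: "vproj G H ` V = q.V"
proof
  show "vproj G H ` V \<subseteq> q.V"
    by (auto elim!: derived_vertsE simp: vproj_derived_vert intro!: q.derived_vertsI rcos_in_quotient)
  show "q.V \<subseteq> vproj G H ` V"
    by (auto elim!: q.derived_vertsE quotient_carrierE simp: vproj_derived_vert[symmetric]
        intro!: derived_vertsI)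
qed

lemma graph_hom_vproj: "graph_hom Y q.Y (vproj G H) (\<lambda>(d, e). (\<pi> d, e))"
proof -
  have "(\<pi> d, e) \<in> sedges q.Y \<and> ssrc q.Y (\<pi> d, e) = vproj G H (ssrc Y (d, e)) \<and>
      stgt q.Y (\<pi> d, e) = vproj G H (stgt Y (d, e))"
    if d: "d \<in> carrier G" and e: "e \<in> sedges X" for d e
  proof -
    have "\<pi> d \<otimes>\<^bsub>Q\<^esub> \<alpha>' e = \<pi> (d \<otimes> \<alpha> e)"
      using d e voltage_closed by (simp add: ind_volt_def rcos_sum)
    then show ?thesis
      using d e by (simp add: derived_graph_simps q.derived_graph_simps rcos_in_quotient
          vproj_derived_vert serre_graph_edge[OF serre_X] voltage_closed)
  qed
  then show ?thesis
    unfolding graph_hom_def by (auto simp: derived_graph_simps)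
qed

lemma connected_quotient_derived_graph: "connected_graph Y \<Longrightarrow> connected_graph q.Y"
  by (rule connected_graph_hom_image[OF graph_hom_vproj])
    (simp_all add: derived_graph_simps q.derived_graph_simps vproj_image)

lemma vproj_vert_act:
  assumes g: "g \<in> carrier G" and x: "x \<in> V"
  shows "vproj G H (vert_act g x) = q.vert_act (\<pi> g) (vproj G H x)"
proof -
  obtain a v where "x = (a <# I v, v)" "a \<in> carrier G" "v \<in> sverts X"
    using x by (rule derived_vertsE)
  then show ?thesis
    using g by (simp add: vert_act_def q.vert_act_def vproj_def quotient_lcos I_subset_carrier
        l_coset_subset_G)
qed

abbreviation "proj \<equiv> proj_div X G \<alpha> I H"
abbreviation "\<beta> \<equiv> beta_div X G \<alpha> I H"

lemma proj_div_eq: "proj D y = (\<Sum>x\<in>{x \<in> V. vproj G H x = y}. D x)"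
  by (simp add: proj_div_def pushforward_def derived_graph_simps)

text \<open>The coset map d \<mapsto> d I_v sends H d0 onto the fibre of the projection through d0 I_v,
  and each of its fibres is a left coset of H \<inter> I_v.\<close>
lemma sum_rcos_lcos_eq_proj_div:
  assumes d0: "d0 \<in> carrier G" and v: "v \<in> sverts X"
  shows "(\<Sum>d\<in>H #> d0. F (d <# I v, v)) = int (card (H \<inter> I v)) * proj F (vproj G H (d0 <# I v, v))"
proof -
  let ?A = "H #> d0" and ?B = "{x \<in> V. vproj G H x = vproj G H (d0 <# I v, v)}"
  let ?g = "\<lambda>d. (d <# I v, v)"
  note Iv = subgroup_I[OF v]
  have A_carr: "?A \<subseteq> carrier G"
    by (rule r_coset_subset_G[OF subset d0])
  have image: "?g ` ?A = ?B"
  proof (intro equalityI subsetI)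
    fix x assume "x \<in> ?g ` ?A"
    then obtain d where d: "d \<in> ?A" "x = ?g d" by auto
    then have "d \<in> carrier G"
      using A_carr by auto
    moreover have "\<pi> ` (d <# I v) = \<pi> ` (d0 <# I v)"
      using rcos_image_lcos_eq_iff[OF Iv \<open>d \<in> carrier G\<close> d0] d(1) by auto
    ultimately show "x \<in> ?B"
      using d v by (simp add: derived_vertsI vproj_def)
  next
    fix x assume x: "x \<in> ?B"
    then obtain b w where bw: "x = (b <# I w, w)" "b \<in> carrier G" "w \<in> sverts X"
      by (auto elim: derived_vertsE)
    then have "w = v" "\<pi> ` (b <# I v) = \<pi> ` (d0 <# I v)"
      using x by (auto simp: vproj_def)
    then obtain d where "d \<in> ?A" "b <# I v = d <# I v"
      using rcos_image_lcos_eq_iff[OF Iv bw(2) d0] by auto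
    then show "x \<in> ?g ` ?A"
      using bw \<open>w = v\<close> by auto
  qed
  have fibre_card: "card {d \<in> ?A. ?g d = x} = card (H \<inter> I v)" if x: "x \<in> ?B" for x
  proof -
    obtain d1 where d1: "d1 \<in> ?A" "x = ?g d1"
      using x unfolding image[symmetric] by (rule imageE)
    have d1_carr: "d1 \<in> carrier G"
      using A_carr d1(1) by (rule subsetD)
    have "?A = H #> d1"
      using repr_independence[OF d1(1) d0 is_subgroup] by simp
    then have "{d \<in> ?A. ?g d = x} = {d \<in> H #> d1. d <# I v = d1 <# I v}"
      using d1(2) by simp
    also have "\<dots> = d1 <# (H \<inter> I v)"
      by (rule lcos_fibre_in_rcos[OF Iv d1_carr])
    also have "card \<dots> = card (H \<inter> I v)"
    proof (rule l_card_cosets_equal[symmetric])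
      show "d1 <# (H \<inter> I v) \<in> lcosets (H \<inter> I v)"
        using d1_carr by (auto simp: LCOSETS_def)
    qed (use subset finite_carrier in auto)
    finally show ?thesis .
  qed
  have "(\<Sum>d\<in>?A. F (?g d)) = (\<Sum>x\<in>?B. \<Sum>d\<in>{d \<in> ?A. ?g d = x}. F (?g d))"
    by (rule sum.group[symmetric]) (use finite_subset[OF A_carr finite_carrier]
        finite_derived_verts image in simp_all)
  also have "\<dots> = (\<Sum>x\<in>?B. int (card (H \<inter> I v)) * F x)"
    by (rule sum.cong[OF refl]) (simp add: fibre_card)
  finally show ?thesis
    by (simp add: proj_div_eq sum_distrib_left)
qed

lemma beta_div_eq: "\<beta> D y = int (card (H \<inter> I (snd y))) * proj D y"
  by (simp add: beta_div_def)

lemma proj_div_in_divisors: "proj D \<in> divisors q.Y"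
  unfolding proj_div_def
  by (rule pushforward_in_divisors) (simp add: derived_graph_simps q.derived_graph_simps vproj_image)

lemma beta_div_in_divisors: "\<beta> D \<in> divisors q.Y"
  using proj_div_in_divisors by (simp add: divisors_def beta_div_eq)

lemma proj_div_div_act:
  assumes g: "g \<in> carrier G"
  shows "proj (div_act G X I g D) = div_act Q X I' (\<pi> g) (proj D)"
proof -
  have fin: "finite (sverts Y)" "finite (sverts q.Y)"
    using serre_graph_finite(1)[OF serre_derived_graph] serre_graph_finite(1)[OF q.serre_derived_graph]
    by simp_all
  have "proj (div_act G X I g D) = pushforward Y (vproj G H \<circ> vert_act g) D"
    using g fin vproj_image vert_act_closed
    by (auto simp: proj_div_def div_act_eq_pushforward derived_graph_simps intro!: pushforward_comp)
  also have "\<dots> = pushforward Y (q.vert_act (\<pi> g) \<circ> vproj G H) D"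
    by (subst pushforward_cong[of Y "vproj G H \<circ> vert_act g" "q.vert_act (\<pi> g) \<circ> vproj G H"])
      (simp_all add: g vproj_vert_act derived_graph_simps)
  also have "\<dots> = div_act Q X I' (\<pi> g) (proj D)"
    using g fin vproj_image
    by (auto simp: proj_div_def q.div_act_eq_pushforward rcos_in_quotient derived_graph_simps
        q.derived_graph_simps intro!: pushforward_comp[symmetric])
  finally show ?thesis .
qed

lemma beta_div_div_act:
  "g \<in> carrier G \<Longrightarrow> \<beta> (div_act G X I g D) = div_act Q X I' (\<pi> g) (\<beta> D)"
  by (simp add: fun_eq_iff beta_div_eq proj_div_div_act q.div_act_eq q.vert_act_def)

lemma proj_div_add: "proj (D + D') = proj D + proj D'"
  by (simp add: proj_div_def pushforward_add)

lemma beta_div_add: "\<beta> (D + D') = \<beta> D + \<beta> D'"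
  by (simp add: fun_eq_iff beta_div_eq proj_div_add distrib_left)

lemma zg_linear_proj_div: "zg_linear X G I Q I' \<pi> proj"
  using proj_div_in_divisors
  by (simp add: zg_linear_def divisors_def q.derived_graph_simps proj_div_add proj_div_div_act)

lemma zg_linear_beta_div: "zg_linear X G I Q I' \<pi> \<beta>"
  using beta_div_in_divisors
  by (simp add: zg_linear_def divisors_def q.derived_graph_simps beta_div_add beta_div_div_act)

lemma beta_div_unit_div:
  assumes v: "v \<in> sverts X"
  shows "\<beta> (unit_div (I v, v)) = (\<lambda>y. int (card (H \<inter> I v)) * unit_div (I' v, v) y)"
proof
  fix y
  have "(I v, v) \<in> V"
    using derived_vertsI[of \<one> v] v lcos_mult_one[OF I_subset_carrier[OF v]] by simp
  moreover have "vproj G H (I v, v) = (I' v, v)"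
    by (simp add: vproj_def ind_sub_def)
  ultimately have "proj (unit_div (I v, v)) y = unit_div (I' v, v) y"
    using finite_derived_verts by (auto simp: proj_div_eq unit_div_def sum.delta')
  then show "\<beta> (unit_div (I v, v)) y = int (card (H \<inter> I v)) * unit_div (I' v, v) y"
    by (auto simp: beta_div_eq unit_div_def)
qed

lemma beta_div_const_div: "\<beta> (const_div Y n) = const_div q.Y (int (card H) * n)"
proof
  fix y
  show "\<beta> (const_div Y n) y = const_div q.Y (int (card H) * n) y"
  proof (cases "y \<in> q.V")
    case True
    then obtain a v where av: "a \<in> carrier G" "v \<in> sverts X" "y = vproj G H (a <# I v, v)"
      unfolding vproj_image[symmetric] by (auto elim: derived_vertsE)
    have "d \<in> H #> a \<Longrightarrow> const_div Y n (d <# I v, v) = n" for d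
      using r_coset_subset_G[OF subset av(1)] av(2)
      by (auto simp: const_div_def derived_graph_simps intro: derived_vertsI)
    then have "(\<Sum>d\<in>H #> a. const_div Y n (d <# I v, v)) = int (card (H #> a)) * n"
      by simp
    also have "card (H #> a) = card H"
      using card_rcosets_equal[OF rcosetsI[OF subset av(1)] subset] by simp
    finally have "\<beta> (const_div Y n) y = int (card H) * n"
      using sum_rcos_lcos_eq_proj_div[OF av(1,2), of "const_div Y n"] av(3)
      by (simp add: beta_div_eq vproj_def)
    then show ?thesis
      using True by (simp add: const_div_def q.derived_graph_simps)
  next
    case False
    then have "\<beta> (const_div Y n) y = 0"
      using beta_div_in_divisors[of "const_div Y n"]
      unfolding divisors_def q.derived_graph_simps by blast
    then show ?thesis
      using False by (simp add: const_div_def q.derived_graph_simps)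
  qed
qed

lemma proj_div_laplacian: "proj (laplacian Y D) = laplacian q.Y (\<beta> D)"
  unfolding proj_div_def
proof (rule pushforward_laplacian[OF serre_derived_graph q.serre_derived_graph graph_hom_vproj])
  fix e' assume "e' \<in> sedges q.Y"
  then obtain d0 e where e': "e' = (\<pi> d0, e)" "d0 \<in> carrier G" "e \<in> sedges X"
    by (auto simp: q.derived_graph_simps elim: quotient_carrierE)
  let ?v = "ssrc X e"
  have v: "?v \<in> sverts X"
    using serre_graph_edge[OF serre_X e'(3)] by simp
  have "{x \<in> sedges Y. (case x of (d, e) \<Rightarrow> (\<pi> d, e)) = e'} = (\<lambda>d. (d, e)) ` (H #> d0)"
    using e' by (auto simp: derived_graph_simps rcos_mem_iff[OF e'(2)])
  then have "(\<Sum>x\<in>{x \<in> sedges Y. (case x of (d, e) \<Rightarrow> (\<pi> d, e)) = e'}. D (ssrc Y x))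
      = (\<Sum>d\<in>H #> d0. D (d <# I ?v, ?v))"
    by (simp add: sum.reindex inj_on_def derived_graph_simps)
  also have "\<dots> = \<beta> D (vproj G H (d0 <# I ?v, ?v))"
    using sum_rcos_lcos_eq_proj_div[OF e'(2) v] by (simp add: beta_div_eq vproj_def)
  also have "\<dots> = \<beta> D (ssrc q.Y e')"
    using graph_hom_vproj e' by (simp add: graph_hom_def derived_graph_simps)
  finally show "(\<Sum>x\<in>{x \<in> sedges Y. (case x of (d, e) \<Rightarrow> (\<pi> d, e)) = e'}. D (ssrc Y x))
      = \<beta> D (ssrc q.Y e')" .
qed

lemma pic_diagram_commutes: "pic_diagram X G \<alpha> I H"
proof -
  have "\<exists>f. (\<forall>D\<in>divisors Y. f (pic_class Y D) = pic_class q.Y (proj D)) \<and> f ` pic Y = pic q.Y"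
    unfolding proj_div_def
    using proj_div_laplacian[unfolded proj_div_def] beta_div_in_divisors finite_derived_verts
    by (intro pic_pushforward_onto) (auto simp: derived_graph_simps q.derived_graph_simps vproj_image)
  then show ?thesis
    unfolding pic_diagram_def Let_def
    using zg_linear_beta_div zg_linear_proj_div beta_div_unit_div beta_div_const_div
      proj_div_laplacian by blast
qed

end

theorem proposition3p3:
  fixes X :: "('v, 'e) sgraph" and G :: "('g, 'b) monoid_scheme"
    and \<alpha> :: "'e \<Rightarrow> 'g" and I :: "'v \<Rightarrow> 'g set"
  assumes "voltage_graph X G \<alpha> I"
    and "finite (carrier G)"
    and "connected_graph (derived_graph X G \<alpha> I)"
  shows "pic_exact_seq X G \<alpha> I \<and>
         (\<forall>H. H \<lhd> G \<longrightarrow>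
              pic_exact_seq X (G Mod H) (ind_volt G H \<alpha>) (ind_sub G H I) \<and>
              pic_diagram X G \<alpha> I H)"
proof -
  interpret finite_voltage_graph G X \<alpha> I
    using finite_voltage_graphI[OF assms(1,2)] .
  have "pic_exact_seq X (G Mod H) (ind_volt G H \<alpha>) (ind_sub G H I) \<and> pic_diagram X G \<alpha> I H"
    if "H \<lhd> G" for H
  proof -
    interpret voltage_graph_quotient G X \<alpha> I H
      by (intro voltage_graph_quotient.intro finite_voltage_graph_axioms that)
    show ?thesis
      using q.pic_exact_seq_derived_graph[OF connected_quotient_derived_graph[OF assms(3)]]
        pic_diagram_commutes by blast
  qed
  then show ?thesis
    using pic_exact_seq_derived_graph[OF assms(3)] by blast
qed

end
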